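(* Let $(\Xi,d_\Xi)$ be a metric space, let $\{P^\nu\}_{\nu\in\mathbb{N}}$ be probabilities on $(\Xi,\mathcal{B}(\Xi))$ converging weakly to a probability $P$, and let $\{h^\nu\}_{\nu\in\mathbb{N}}$ be measurable $\overline{\mathbb{R}}$-valued functions on $\Xi$ such that $$\limsup_{K\to+\infty}\ \limsup_{\nu\to+\infty}\mathbb{E}^{P^\nu}\big[h^\nu(\xi)\,\mathbb{1}\{\xi:h^\nu(\xi)\ge K\}\big]=0.$$ Then $$\limsup_{\nu\to+\infty}\mathbb{E}^{P^\nu}\big[h^\nu(\xi)\big]\ \le\ \mathbb{E}^{P}\Big[\limsup_{(\nu,\zeta)\to(+\infty,\xi)}h^\nu(\zeta)\Big].$$
   Context: $\overline{\mathbb{R}}=\mathbb{R}\cup\{-\infty,+\infty\}$; weak convergence means $\int\varphi\,dP^\nu\to\int\varphi\,dP$ for all bounded continuous $\varphi$. For a probability $\mu$ and measurable $\overline{\mathbb{R}}$-valued $g$, $\mathbb{E}^\mu[g]:=\int g_+\,d\mu-\int g_-\,d\mu$ with $g_+=\max\{g,0\}$, $g_-=-\min\{g,0\}$ and conventions $+\infty-\alpha=+\infty$ for all $\alpha\in\overline{\mathbb{R}}$ and $\beta-(+\infty)=-\infty$ for $\beta\in\mathbb{R}$. $\mathbb{1}\{B\}$ is the indicator of $B$. $\limsup_{(\nu,\zeta)\to(+\infty,\xi)}h^\nu(\zeta):=\lim_{\delta\downarrow0}\lim_{N\to\infty}\sup\{h^\nu(\zeta):\nu\ge N,\ d_\Xi(\zeta,\xi)<\delta\}$.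 *)

theory Defs
  imports "HOL-Probability.Probability"
begin

text \<open>Extended expectation E^mu[g] = int g_+ - int g_-, with the conventions
  +infinity - alpha = +infinity (for all alpha) and beta - (+infinity) = -infinity.\<close>
definition ext_expect :: "'a measure \<Rightarrow> ('a \<Rightarrow> ereal) \<Rightarrow> ereal" where
  "ext_expect M g =
     (let pos = enn2ereal (\<integral>\<^sup>+ x. e2ennreal (max (g x) 0) \<partial>M);
          neg = enn2ereal (\<integral>\<^sup>+ x. e2ennreal (- min (g x) 0) \<partial>M)
      in if pos = \<infinity> then \<infinity> else pos - neg)"

definition weak_conv :: "(nat \<Rightarrow> 'a::metric_space measure) \<Rightarrow> 'a measure \<Rightarrow> bool" where
  "weak_conv Pn P \<longleftrightarrow>
     (\<forall>\<phi> :: 'a \<Rightarrow> real. continuous_on UNIV \<phi> \<and> bounded (range \<phi>) \<longrightarrow>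
        (\<lambda>n. \<integral>x. \<phi> x \<partial>(Pn n)) \<longlonglongrightarrow> (\<integral>x. \<phi> x \<partial>P))"

definition joint_limsup :: "(nat \<Rightarrow> 'a::metric_space \<Rightarrow> ereal) \<Rightarrow> 'a \<Rightarrow> ereal" where
  "joint_limsup h \<xi> =
     Lim (at_right (0::real))
       (\<lambda>\<delta>. lim (\<lambda>N. Sup {h \<nu> \<zeta> | \<nu> \<zeta>. \<nu> \<ge> N \<and> dist \<zeta> \<xi> < \<delta>}))"

end

theory Submission
  imports Defs
begin

text \<open>Choose a level \<open>K \<ge> 0\<close> whose tail contribution \<open>limsup\<^sub>\<nu> E[h\<^sup>\<nu> 1{h\<^sup>\<nu> \<ge> K}]\<close> is below
  \<open>\<epsilon>\<close>, so that it suffices to bound the truncations \<open>g\<^sup>\<nu> = min h\<^sup>\<nu> K\<close>. For each \<open>m\<close>, the supremum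
  of \<open>g\<^sup>\<nu>(\<zeta>)\<close> over \<open>\<nu> \<ge> m\<close> and \<open>d(\<zeta>, x) < 1/(m+1)\<close>, cut off below at \<open>-m\<close>, has a bounded Lipschitz
  majorant \<open>\<phi>\<^sub>m\<close> that dominates \<open>g\<^sup>\<nu>\<close> for \<open>\<nu> \<ge> m\<close> and only sees the \<open>2/(m+1)\<close>-ball around each point.
  Weak convergence gives \<open>limsup\<^sub>\<nu> E[h\<^sup>\<nu>] \<le> \<integral>\<phi>\<^sub>m dP + \<epsilon>\<close>; the \<open>\<phi>\<^sub>m\<close> decrease to a function below
  the joint limsup, and monotone convergence from above (all \<open>\<phi>\<^sub>m \<le> K\<close>) lets \<open>m \<rightarrow> \<infinity>\<close>.\<close>

section \<open>Extended expectation\<close>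

lemma ext_expect_eq_diff:
  assumes "(\<integral>\<^sup>+x. e2ennreal (max (g x) 0) \<partial>M) < \<infinity>"
  shows "ext_expect M g = enn2ereal (\<integral>\<^sup>+x. e2ennreal (max (g x) 0) \<partial>M)
                          - enn2ereal (\<integral>\<^sup>+x. e2ennreal (- min (g x) 0) \<partial>M)"
  using assms by (auto simp: ext_expect_def Let_def)

lemma nn_integral_pos_part_bounded_above:
  assumes "finite_measure M" and "\<And>x. f x \<le> ereal c"
  shows "(\<integral>\<^sup>+x. e2ennreal (max (f x) 0) \<partial>M) < \<infinity>"
proof -
  have "(\<integral>\<^sup>+x. e2ennreal (max (f x) 0) \<partial>M) \<le> (\<integral>\<^sup>+x. ennreal (max c 0) \<partial>M)"
  proof (intro nn_integral_mono)
    fix x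
    have "max (f x) 0 \<le> ereal (max c 0)"
      using assms(2)[of x] by (cases "f x") (auto simp: max_def)
    then show "e2ennreal (max (f x) 0) \<le> ennreal (max c 0)"
      by (metis e2ennreal_ereal e2ennreal_mono)
  qed
  also have "\<dots> < \<infinity>"
    using finite_measure.emeasure_finite[OF assms(1), of "space M"]
    by (simp add: ennreal_mult_less_top top.not_eq_extremum)
  finally show ?thesis .
qed

lemma ext_expect_mono:
  assumes "\<And>x. f x \<le> g x"
  shows "ext_expect M f \<le> ext_expect M g"
proof -
  have "(\<integral>\<^sup>+x. e2ennreal (max (f x) 0) \<partial>M) \<le> (\<integral>\<^sup>+x. e2ennreal (max (g x) 0) \<partial>M)"
    by (intro nn_integral_mono e2ennreal_mono max.mono assms order_refl)
  moreover have "(\<integral>\<^sup>+x. e2ennreal (- min (g x) 0) \<partial>M) \<le> (\<integral>\<^sup>+x. e2ennreal (- min (f x) 0) \<partial>M)"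
    by (intro nn_integral_mono e2ennreal_mono ereal_minus_le_minus[THEN iffD2] min.mono assms order_refl)
  ultimately show ?thesis
    unfolding ext_expect_def Let_def
    by (auto simp: less_eq_ennreal.rep_eq intro!: ereal_minus_mono)
qed

lemma ext_expect_ereal:
  assumes "integrable M f"
  shows "ext_expect M (\<lambda>x. ereal (f x)) = ereal (\<integral>x. f x \<partial>M)"
proof -
  have pos: "e2ennreal (max (ereal (f x)) 0) = ennreal (f x)" for x
    by (cases "f x \<le> 0") (auto simp: max_def ennreal_neg e2ennreal_neg)
  have neg: "e2ennreal (- min (ereal (f x)) 0) = ennreal (- f x)" for x
    by (cases "f x \<le> 0") (auto simp: min_def ennreal_neg)
  obtain a b where "(\<integral>\<^sup>+x. ennreal (f x) \<partial>M) = ennreal a" "a \<ge> 0"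
    and "(\<integral>\<^sup>+x. ennreal (- f x) \<partial>M) = ennreal b" "b \<ge> 0"
    using assms unfolding real_integrable_def by (metis ennreal_cases infinity_ennreal_def)
  then show ?thesis
    unfolding ext_expect_def Let_def pos neg real_lebesgue_integral_def[OF assms] by simp
qed

lemma nn_integral_pos_part_INF:
  fixes f :: "nat \<Rightarrow> 'a \<Rightarrow> ereal"
  assumes [measurable]: "\<And>m. f m \<in> borel_measurable M"
    and dec: "\<And>m x. f (Suc m) x \<le> f m x"
    and fin: "(\<integral>\<^sup>+x. e2ennreal (max (f 0 x) 0) \<partial>M) < \<infinity>"
  shows "(\<integral>\<^sup>+x. e2ennreal (max (INF m. f m x) 0) \<partial>M) = (INF m. \<integral>\<^sup>+x. e2ennreal (max (f m x) 0) \<partial>M)"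
proof -
  have "e2ennreal (max (INF m. f m x) 0) = (INF m. e2ennreal (max (f m x) 0))" for x
  proof (rule LIMSEQ_unique)
    show "(\<lambda>m. e2ennreal (max (f m x) 0)) \<longlonglongrightarrow> e2ennreal (max (INF m. f m x) 0)"
      by (intro tendsto_e2ennrealI tendsto_max LIMSEQ_INF decseq_SucI dec tendsto_const)
    show "(\<lambda>m. e2ennreal (max (f m x) 0)) \<longlonglongrightarrow> (INF m. e2ennreal (max (f m x) 0))"
      by (intro LIMSEQ_INF decseq_SucI e2ennreal_mono max.mono dec order_refl)
  qed
  then show ?thesis
    using fin
    by (simp, intro nn_integral_monotone_convergence_INF_decseq[where i=0] decseq_SucI le_funI)
       (auto intro!: e2ennreal_mono max.mono dec)
qed

lemma nn_integral_neg_part_INF: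
  fixes f :: "nat \<Rightarrow> 'a \<Rightarrow> ereal"
  assumes [measurable]: "\<And>m. f m \<in> borel_measurable M"
    and dec: "\<And>m x. f (Suc m) x \<le> f m x"
  shows "(\<integral>\<^sup>+x. e2ennreal (- min (INF m. f m x) 0) \<partial>M) = (SUP m. \<integral>\<^sup>+x. e2ennreal (- min (f m x) 0) \<partial>M)"
proof -
  have neg_mono: "e2ennreal (- min (f m x) 0) \<le> e2ennreal (- min (f (Suc m) x) 0)" for m x
    by (intro e2ennreal_mono ereal_minus_le_minus[THEN iffD2] min.mono dec order_refl)
  have "e2ennreal (- min (INF m. f m x) 0) = (SUP m. e2ennreal (- min (f m x) 0))" for x
  proof (rule LIMSEQ_unique)
    show "(\<lambda>m. e2ennreal (- min (f m x) 0)) \<longlonglongrightarrow> e2ennreal (- min (INF m. f m x) 0)"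
      by (intro tendsto_e2ennrealI tendsto_uminus_ereal tendsto_min LIMSEQ_INF decseq_SucI dec tendsto_const)
    show "(\<lambda>m. e2ennreal (- min (f m x) 0)) \<longlonglongrightarrow> (SUP m. e2ennreal (- min (f m x) 0))"
      by (intro LIMSEQ_SUP incseq_SucI neg_mono)
  qed
  then show ?thesis
    by (simp, intro nn_integral_monotone_convergence_SUP incseq_SucI le_funI neg_mono) auto
qed

lemma ext_expect_monotone_convergence_INF:
  fixes f :: "nat \<Rightarrow> 'a \<Rightarrow> ereal"
  assumes [measurable]: "\<And>m. f m \<in> borel_measurable M"
    and dec: "\<And>m x. f (Suc m) x \<le> f m x"
    and fin: "(\<integral>\<^sup>+x. e2ennreal (max (f 0 x) 0) \<partial>M) < \<infinity>"
  shows "(\<lambda>m. ext_expect M (f m)) \<longlonglongrightarrow> ext_expect M (\<lambda>x. INF m. f m x)"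
proof -
  define pos where "pos m = (\<integral>\<^sup>+x. e2ennreal (max (f m x) 0) \<partial>M)" for m
  define neg where "neg m = (\<integral>\<^sup>+x. e2ennreal (- min (f m x) 0) \<partial>M)" for m
  have "decseq pos" and "incseq neg"
    unfolding pos_def neg_def
    by (intro decseq_SucI incseq_SucI nn_integral_mono e2ennreal_mono ereal_minus_le_minus[THEN iffD2]
          max.mono min.mono dec order_refl)+
  have pos_fin: "pos m < \<infinity>" for m
    using \<open>decseq pos\<close> fin unfolding pos_def decseq_def by (meson le0 le_less_trans)
  then have "(INF m. pos m) < \<infinity>"
    by (meson INF_lower UNIV_I le_less_trans)
  then have "ext_expect M (\<lambda>x. INF m. f m x) = enn2ereal (INF m. pos m) - enn2ereal (SUP m. neg m)"
    using nn_integral_pos_part_INF[where f=f, OF assms] nn_integral_neg_part_INF[where f=f, OF assms(1,2)]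
    unfolding pos_def neg_def by (simp add: ext_expect_eq_diff)
  moreover have "ext_expect M (f m) = enn2ereal (pos m) - enn2ereal (neg m)" for m
    using pos_fin[of m] unfolding pos_def neg_def by (rule ext_expect_eq_diff)
  moreover have "(\<lambda>m. enn2ereal (pos m) - enn2ereal (neg m))
      \<longlonglongrightarrow> enn2ereal (INF m. pos m) - enn2ereal (SUP m. neg m)"
    using \<open>(INF m. pos m) < \<infinity>\<close> \<open>decseq pos\<close> \<open>incseq neg\<close>
    by (intro tendsto_diff_ereal_general tendsto_enn2erealI LIMSEQ_INF LIMSEQ_SUP) auto
  ultimately show ?thesis by simp
qed

lemma ext_expect_le_truncation_add_tail:
  fixes h :: "'a \<Rightarrow> ereal"
  assumes "finite_measure M" and [measurable]: "h \<in> borel_measurable M" and "K \<ge> 0"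
  shows "ext_expect M h \<le> ext_expect M (\<lambda>x. min (h x) (ereal K))
           + ext_expect M (\<lambda>x. if h x \<ge> ereal K then h x else 0)"
proof -
  define g where "g x = min (h x) (ereal K)" for x
  define t where "t x = (if h x \<ge> ereal K then h x else 0)" for x
  define pos where "pos f = (\<integral>\<^sup>+x. e2ennreal (max (f x) 0) \<partial>M)" for f :: "'a \<Rightarrow> ereal"
  define neg where "neg f = (\<integral>\<^sup>+x. e2ennreal (- min (f x) 0) \<partial>M)" for f :: "'a \<Rightarrow> ereal"
  have [measurable]: "g \<in> borel_measurable M" "t \<in> borel_measurable M"
    unfolding g_def t_def by measurable
  have "pos h \<le> (\<integral>\<^sup>+x. e2ennreal (max (g x) 0) + e2ennreal (max (t x) 0) \<partial>M)"
    unfolding pos_def g_def t_def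
    by (intro nn_integral_mono) (auto simp: add_increasing add_increasing2)
  also have "\<dots> = pos g + pos t"
    unfolding pos_def by (rule nn_integral_add) auto
  finally have pos_h: "pos h \<le> pos g + pos t" .
  have pos_g: "pos g < \<infinity>"
    unfolding pos_def g_def by (rule nn_integral_pos_part_bounded_above[OF assms(1), of _ K]) simp
  have neg_g: "neg g = neg h"
    unfolding neg_def g_def using \<open>K \<ge> 0\<close>
    by (intro nn_integral_cong arg_cong[where f=e2ennreal]) (simp add: min.assoc min_absorb2)
  have "0 \<le> t x" for x
    unfolding t_def using \<open>K \<ge> 0\<close> by (auto intro: order_trans[of 0 "ereal K"])
  then have neg_t: "neg t = 0"
    unfolding neg_def by (simp add: min_absorb2)
  have "ext_expect M h = (if enn2ereal (pos h) = \<infinity> then \<infinity> else enn2ereal (pos h) - enn2ereal (neg h))"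
    unfolding ext_expect_def Let_def pos_def neg_def ..
  also have "\<dots> \<le> (enn2ereal (pos g) - enn2ereal (neg h)) + enn2ereal (pos t)"
    using pos_h pos_g
    by (cases "pos h" rule: ennreal_cases; cases "pos g" rule: ennreal_cases;
        cases "pos t" rule: ennreal_cases; cases "neg h" rule: ennreal_cases)
       (auto simp flip: ennreal_plus simp: top_unique)
  also have "enn2ereal (pos g) - enn2ereal (neg h) = ext_expect M g"
    using pos_g neg_g unfolding pos_def neg_def by (simp add: ext_expect_eq_diff)
  also have "enn2ereal (pos t) = ext_expect M t"
    using neg_t unfolding ext_expect_def Let_def pos_def neg_def by (simp add: zero_ennreal.rep_eq)
  finally show ?thesis
    unfolding g_def t_def .
qed

definition near_sup :: "(nat \<Rightarrow> 'a::metric_space \<Rightarrow> ereal) \<Rightarrow> real \<Rightarrow> nat \<Rightarrow> 'a \<Rightarrow> ereal" where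
  "near_sup h \<delta> N x = Sup {h \<nu> \<zeta> | \<nu> \<zeta>. \<nu> \<ge> N \<and> dist \<zeta> x < \<delta>}"

lemma near_sup_mono:
  assumes "N' \<le> N" and "\<And>\<zeta>. dist \<zeta> x < \<delta> \<Longrightarrow> dist \<zeta> x' < \<delta>'"
  shows "near_sup h \<delta> N x \<le> near_sup h \<delta>' N' x'"
  unfolding near_sup_def using assms by (intro Sup_subset_mono) (blast intro: le_trans)

lemma near_sup_mono_fun:
  assumes "\<And>\<nu> x. g \<nu> x \<le> h \<nu> x"
  shows "near_sup g \<delta> N x \<le> near_sup h \<delta> N x"
  unfolding near_sup_def by (rule Sup_least) (auto intro!: Sup_upper2 assms)

lemma near_sup_upper:
  assumes "\<delta> > 0" and "N \<le> \<nu>"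
  shows "h \<nu> x \<le> near_sup h \<delta> N x"
  unfolding near_sup_def using assms by (intro Sup_upper) force

lemma near_sup_least:
  assumes "\<And>\<nu> x. h \<nu> x \<le> c"
  shows "near_sup h \<delta> N x \<le> c"
  unfolding near_sup_def using assms by (auto intro!: Sup_least)

lemma joint_limsup_eq_INF_near_sup:
  "joint_limsup h x = (INF \<delta>\<in>{0<..}. INF N. near_sup h \<delta> N x)"
proof -
  define r where "r \<delta> = (INF N. near_sup h \<delta> N x)" for \<delta>
  have "lim (\<lambda>N. Sup {h \<nu> \<zeta> | \<nu> \<zeta>. \<nu> \<ge> N \<and> dist \<zeta> x < \<delta>}) = r \<delta>" for \<delta>
    unfolding r_def near_sup_def[symmetric]
    by (intro limI LIMSEQ_INF decseq_SucI near_sup_mono) auto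
  moreover have r_mono: "r \<delta> \<le> r \<delta>'" if "\<delta> \<le> \<delta>'" for \<delta> \<delta>'
    unfolding r_def using that by (intro INF_mono) (auto intro!: near_sup_mono)
  then have "(r \<longlongrightarrow> (INF \<delta>\<in>{0<..}. r \<delta>)) (at_right 0)"
    using Lim_right_bound[of UNIV 0 r "-\<infinity>"] by simp
  ultimately show ?thesis
    unfolding joint_limsup_def r_def[symmetric] by (intro tendsto_Lim) auto
qed

lemma joint_limsup_mono:
  assumes "\<And>\<nu> x. g \<nu> x \<le> h \<nu> x"
  shows "joint_limsup g x \<le> joint_limsup h x"
  unfolding joint_limsup_eq_INF_near_sup using assms by (intro INF_mono' near_sup_mono_fun)

section \<open>Lipschitz majorants\<close>

text \<open>The sup-convolution of \<open>u\<close> with \<open>L \<cdot> dist\<close>, the least \<open>L\<close>-Lipschitz majorant of \<open>u\<close>.\<close>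

definition lipschitz_majorant :: "real \<Rightarrow> ('a::metric_space \<Rightarrow> real) \<Rightarrow> 'a \<Rightarrow> real" where
  "lipschitz_majorant L u x = (SUP y. u y - L * dist x y)"

lemma bdd_above_lipschitz_majorant:
  assumes "\<And>y. u y \<le> K" and "L \<ge> 0"
  shows "bdd_above (range (\<lambda>y. u y - L * dist x y))"
proof (rule bdd_aboveI2)
  fix y
  have "0 \<le> L * dist x y" using assms(2) by simp
  then show "u y - L * dist x y \<le> K" using assms(1)[of y] by linarith
qed

lemma lipschitz_majorant_ge:
  assumes "\<And>y. u y \<le> K" and "L \<ge> 0"
  shows "u x \<le> lipschitz_majorant L u x"
proof -
  have "bdd_above (range (\<lambda>y. u y - L * dist x y))"
    using assms by (rule bdd_above_lipschitz_majorant)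
  then show ?thesis
    unfolding lipschitz_majorant_def using cSUP_upper[of x UNIV] by fastforce
qed

lemma lipschitz_majorant_le_local:
  assumes "\<And>y. u y \<le> K" and "L \<ge> 0"
    and "\<And>y. dist x y < \<delta> \<Longrightarrow> u y \<le> b" and "K - L * \<delta> \<le> b"
  shows "lipschitz_majorant L u x \<le> b"
  unfolding lipschitz_majorant_def
proof (rule cSUP_least)
  fix y
  show "u y - L * dist x y \<le> b"
  proof (cases "dist x y < \<delta>")
    case True
    have "0 \<le> L * dist x y" using assms(2) by simp
    then show ?thesis using assms(3)[OF True] by linarith
  next
    case False
    then have "L * \<delta> \<le> L * dist x y" using assms(2) by (simp add: mult_left_mono)
    then show ?thesis using assms(1)[of y] assms(4) by simp
  qed
qed simp

lemma lipschitz_majorant_le: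
  assumes "\<And>y. u y \<le> K" and "L \<ge> 0"
  shows "lipschitz_majorant L u x \<le> K"
  using assms by (rule lipschitz_majorant_le_local[where \<delta>=0]) auto

lemma lipschitz_on_lipschitz_majorant:
  assumes "\<And>y. u y \<le> K" and "L \<ge> 0"
  shows "L-lipschitz_on UNIV (lipschitz_majorant L u)"
proof (rule lipschitz_onI)
  have one_sided: "lipschitz_majorant L u x \<le> lipschitz_majorant L u x' + L * dist x x'" for x x'
    unfolding lipschitz_majorant_def
  proof (rule cSUP_least)
    fix y
    have "L * dist x' y \<le> L * dist x y + L * dist x x'"
      using assms(2) dist_triangle[of x' y x] by (metis add.commute dist_commute distrib_left mult_left_mono)
    then have "u y - L * dist x y \<le> (u y - L * dist x' y) + L * dist x x'" by simp
    also have "\<dots> \<le> (SUP y. u y - L * dist x' y) + L * dist x x'"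
      using assms by (intro add_right_mono cSUP_upper bdd_above_lipschitz_majorant) auto
    finally show "u y - L * dist x y \<le> (SUP y. u y - L * dist x' y) + L * dist x x'" .
  qed simp
  show "dist (lipschitz_majorant L u x) (lipschitz_majorant L u x') \<le> L * dist x x'" for x x'
    using one_sided[of x x'] one_sided[of x' x] by (simp add: dist_real_def dist_commute abs_le_iff)
qed (rule assms(2))

lemma lipschitz_majorant_mono:
  assumes "\<And>y. u y \<le> u' y" and "L' \<le> L"
    and "\<And>y. u' y \<le> K" and "L' \<ge> 0"
  shows "lipschitz_majorant L u x \<le> lipschitz_majorant L' u' x"
  unfolding lipschitz_majorant_def
proof (rule cSUP_mono)
  show "bdd_above (range (\<lambda>y. u' y - L' * dist x y))"
    using assms(3,4) by (rule bdd_above_lipschitz_majorant)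
  show "\<exists>y'\<in>UNIV. u y - L * dist x y \<le> u' y' - L' * dist x y'" for y
    using assms(1)[of y] mult_right_mono[OF assms(2) zero_le_dist[of x y]] by (intro bexI[of _ y]) auto
qed simp

text \<open>The cut-off at \<open>-m\<close> makes the value finite for families bounded above, so \<open>real_of_ereal\<close> loses
  nothing. The slope \<open>(K + m)(m + 1)\<close> makes the majorant fall from \<open>K\<close> to \<open>-m\<close> within distance
  \<open>1/(m+1)\<close>, which is why \<open>upper_approx K g m x\<close> only depends on \<open>g\<close> near \<open>x\<close>.\<close>

definition truncated_near_sup :: "(nat \<Rightarrow> 'a::metric_space \<Rightarrow> ereal) \<Rightarrow> nat \<Rightarrow> 'a \<Rightarrow> real" where
  "truncated_near_sup g m y = real_of_ereal (max (near_sup g (1 / (real m + 1)) m y) (ereal (- real m)))"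

definition upper_approx :: "real \<Rightarrow> (nat \<Rightarrow> 'a::metric_space \<Rightarrow> ereal) \<Rightarrow> nat \<Rightarrow> 'a \<Rightarrow> real" where
  "upper_approx K g m = lipschitz_majorant ((K + real m) * (real m + 1)) (truncated_near_sup g m)"

context
  fixes g :: "nat \<Rightarrow> 'a::metric_space \<Rightarrow> ereal" and K :: real
  assumes g_le_K: "\<And>\<nu> x. g \<nu> x \<le> ereal K" and K_nonneg: "K \<ge> 0"
begin

lemma
  shows ereal_truncated_near_sup:
      "ereal (truncated_near_sup g m y) = max (near_sup g (1 / (real m + 1)) m y) (ereal (- real m))"
    and truncated_near_sup_ge: "- real m \<le> truncated_near_sup g m y"
    and truncated_near_sup_le: "truncated_near_sup g m y \<le> K"
proof -
  define s where "s = max (near_sup g (1 / (real m + 1)) m y) (ereal (- real m))"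
  have "near_sup g (1 / (real m + 1)) m y \<le> ereal K"
    by (rule near_sup_least) (rule g_le_K)
  then have "s \<le> ereal K" unfolding s_def using K_nonneg by simp
  moreover have "ereal (- real m) \<le> s" unfolding s_def by simp
  ultimately have "\<bar>s\<bar> \<noteq> \<infinity>" by auto
  then have s_eq: "ereal (real_of_ereal s) = s" by (rule ereal_real')
  then show "ereal (truncated_near_sup g m y) = max (near_sup g (1 / (real m + 1)) m y) (ereal (- real m))"
    unfolding truncated_near_sup_def s_def .
  show "- real m \<le> truncated_near_sup g m y"
    using \<open>ereal (- real m) \<le> s\<close> unfolding truncated_near_sup_def s_def[symmetric]
    by (subst (asm) s_eq[symmetric]) simp
  show "truncated_near_sup g m y \<le> K"
    using \<open>s \<le> ereal K\<close> unfolding truncated_near_sup_def s_def[symmetric]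
    by (subst (asm) s_eq[symmetric]) simp
qed

private lemma slope_nonneg: "(K + real m) * (real m + 1) \<ge> 0"
  using K_nonneg by simp

lemma truncated_near_sup_le_upper_approx: "truncated_near_sup g m x \<le> upper_approx K g m x"
  unfolding upper_approx_def
  by (rule lipschitz_majorant_ge[of "truncated_near_sup g m" K, OF truncated_near_sup_le slope_nonneg])

lemma upper_approx_ge: "- real m \<le> upper_approx K g m x"
  using truncated_near_sup_ge truncated_near_sup_le_upper_approx by (rule order_trans)

lemma upper_approx_le: "upper_approx K g m x \<le> K"
  unfolding upper_approx_def
  by (rule lipschitz_majorant_le[of "truncated_near_sup g m" K, OF truncated_near_sup_le slope_nonneg])

lemma lipschitz_on_upper_approx: "((K + real m) * (real m + 1))-lipschitz_on UNIV (upper_approx K g m)"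
  unfolding upper_approx_def
  by (rule lipschitz_on_lipschitz_majorant[of "truncated_near_sup g m" K, OF truncated_near_sup_le slope_nonneg])

lemma continuous_on_upper_approx: "continuous_on UNIV (upper_approx K g m)"
  using lipschitz_on_upper_approx by (rule lipschitz_on_continuous_on)

lemma bounded_range_upper_approx: "bounded (range (upper_approx K g m))"
proof -
  have "\<bar>upper_approx K g m x\<bar> \<le> K + real m" for x
    using upper_approx_ge[of m x] upper_approx_le[of m x] K_nonneg by linarith
  then show ?thesis unfolding bounded_real by blast
qed

lemma upper_approx_Suc_le: "upper_approx K g (Suc m) x \<le> upper_approx K g m x"
  unfolding upper_approx_def
proof (rule lipschitz_majorant_mono)
  show "truncated_near_sup g (Suc m) y \<le> truncated_near_sup g m y" for y
  proof -
    have "near_sup g (1 / (real (Suc m) + 1)) (Suc m) y \<le> near_sup g (1 / (real m + 1)) m y"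
    proof (rule near_sup_mono)
      show "dist \<zeta> y < 1 / (real m + 1)" if "dist \<zeta> y < 1 / (real (Suc m) + 1)" for \<zeta>
        using that by (rule less_le_trans) (simp add: field_simps)
    qed simp
    then have "ereal (truncated_near_sup g (Suc m) y) \<le> ereal (truncated_near_sup g m y)"
      unfolding ereal_truncated_near_sup by (rule max.mono) simp_all
    then show ?thesis by simp
  qed
  show "(K + real m) * (real m + 1) \<le> (K + real (Suc m)) * (real (Suc m) + 1)"
    using K_nonneg by (intro mult_mono) auto
qed (use truncated_near_sup_le slope_nonneg in auto)

lemma le_upper_approx:
  assumes "m \<le> \<nu>"
  shows "g \<nu> x \<le> ereal (upper_approx K g m x)"
proof -
  have "g \<nu> x \<le> near_sup g (1 / (real m + 1)) m x"
    using assms by (intro near_sup_upper) auto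
  also have "\<dots> \<le> ereal (truncated_near_sup g m x)"
    unfolding ereal_truncated_near_sup by simp
  also have "\<dots> \<le> ereal (upper_approx K g m x)"
    using truncated_near_sup_le_upper_approx by simp
  finally show ?thesis .
qed

lemma upper_approx_le_near_sup:
  "ereal (upper_approx K g m x) \<le> max (near_sup g (2 / (real m + 1)) m x) (ereal (- real m))"
proof -
  define \<delta> where "\<delta> = 1 / (real m + 1)"
  define B where "B = max (near_sup g (2 * \<delta>) m x) (ereal (- real m))"
  have "near_sup g (2 * \<delta>) m x \<le> ereal K"
    by (rule near_sup_least) (rule g_le_K)
  then have "B \<le> ereal K" unfolding B_def using K_nonneg by simp
  moreover have "ereal (- real m) \<le> B" unfolding B_def by simp
  ultimately obtain b where b: "B = ereal b" "- real m \<le> b"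
    by (cases B) auto
  have "upper_approx K g m x \<le> b"
    unfolding upper_approx_def
  proof (rule lipschitz_majorant_le_local[OF truncated_near_sup_le slope_nonneg[of m]])
    show "truncated_near_sup g m y \<le> b" if "dist x y < 1 / (real m + 1)" for y
    proof -
      have "near_sup g \<delta> m y \<le> near_sup g (2 * \<delta>) m x"
      proof (rule near_sup_mono)
        show "dist \<zeta> x < 2 * \<delta>" if "dist \<zeta> y < \<delta>" for \<zeta>
          using that \<open>dist x y < 1 / (real m + 1)\<close> dist_triangle[of \<zeta> x y]
          unfolding \<delta>_def by (simp add: dist_commute)
      qed simp
      then have "ereal (truncated_near_sup g m y) \<le> B"
        unfolding ereal_truncated_near_sup B_def \<delta>_def by (rule max.mono[OF _ order_refl])
      then show ?thesis using b by simp
    qed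
    show "K - (K + real m) * (real m + 1) * (1 / (real m + 1)) \<le> b"
      using b by simp
  qed
  then show ?thesis using b unfolding B_def \<delta>_def by simp
qed

lemma INF_upper_approx_le_joint_limsup: "(INF m. ereal (upper_approx K g m x)) \<le> joint_limsup g x"
proof (rule dense_ge)
  fix a assume "joint_limsup g x < a"
  then obtain z where z: "joint_limsup g x < ereal z" "ereal z < a"
    using ereal_dense2 by blast
  then obtain \<delta> N where \<delta>: "\<delta> > 0" and N: "near_sup g \<delta> N x < ereal z"
    unfolding joint_limsup_eq_INF_near_sup by (auto simp: INF_less_iff)
  obtain m :: nat where m: "max (max (real N) (2 / \<delta>)) (- z) < real m"
    using reals_Archimedean2 by blast
  then have "2 / (real m + 1) \<le> \<delta>"
    using \<delta> by (simp add: field_simps)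
  then have "near_sup g (2 / (real m + 1)) m x \<le> near_sup g \<delta> N x"
    using m by (intro near_sup_mono) auto
  then have "max (near_sup g (2 / (real m + 1)) m x) (ereal (- real m)) < ereal z"
    using N m by simp
  then have "ereal (upper_approx K g m x) < ereal z"
    by (rule le_less_trans[OF upper_approx_le_near_sup])
  then show "(INF m. ereal (upper_approx K g m x)) \<le> a"
    using z(2) by (meson INF_lower UNIV_I less_imp_le order.trans)
qed

end

section \<open>Passing to the limit\<close>

lemma integrable_bounded_continuous:
  fixes f :: "'a::metric_space \<Rightarrow> real"
  assumes "finite_measure M" and "sets M = sets borel"
    and "continuous_on UNIV f" and "bounded (range f)"
  shows "integrable M f"
proof -
  obtain B where "\<And>x. norm (f x) \<le> B"
    using assms(4) by (auto simp: bounded_iff)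
  moreover have "f \<in> borel_measurable M"
    unfolding measurable_cong_sets[OF assms(2) refl] using assms(3) by (rule borel_measurable_continuous_onI)
  ultimately show ?thesis
    by (intro finite_measure.integrable_const_bound[OF assms(1)]) auto
qed

lemma limsup_ext_expect_le_integral_add_tail:
  fixes Pn :: "nat \<Rightarrow> 'a::metric_space measure" and h :: "nat \<Rightarrow> 'a \<Rightarrow> ereal"
  assumes "\<And>\<nu>. prob_space (Pn \<nu>)" and "\<And>\<nu>. sets (Pn \<nu>) = sets borel" and "weak_conv Pn P"
    and "\<And>\<nu>. h \<nu> \<in> borel_measurable borel" and "K \<ge> 0"
    and "continuous_on UNIV \<phi>" and "bounded (range \<phi>)"
    and "\<And>\<nu> x. m \<le> \<nu> \<Longrightarrow> min (h \<nu> x) (ereal K) \<le> ereal (\<phi> x)"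
  shows "limsup (\<lambda>\<nu>. ext_expect (Pn \<nu>) (h \<nu>))
           \<le> ereal (\<integral>x. \<phi> x \<partial>P)
             + limsup (\<lambda>\<nu>. ext_expect (Pn \<nu>) (\<lambda>x. if h \<nu> x \<ge> ereal K then h \<nu> x else 0))"
proof -
  define tail where "tail \<nu> = ext_expect (Pn \<nu>) (\<lambda>x. if h \<nu> x \<ge> ereal K then h \<nu> x else 0)" for \<nu>
  have "ext_expect (Pn \<nu>) (h \<nu>) \<le> ereal (\<integral>x. \<phi> x \<partial>Pn \<nu>) + tail \<nu>" if "m \<le> \<nu>" for \<nu>
  proof -
    have "finite_measure (Pn \<nu>)"
      using assms(1) by (rule prob_space.finite_measure)
    moreover have "h \<nu> \<in> borel_measurable (Pn \<nu>)"
      using assms(4) measurable_cong_sets[OF assms(2) refl] by blast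
    ultimately have "ext_expect (Pn \<nu>) (h \<nu>) \<le> ext_expect (Pn \<nu>) (\<lambda>x. min (h \<nu> x) (ereal K)) + tail \<nu>"
      unfolding tail_def using assms(5) by (rule ext_expect_le_truncation_add_tail)
    also have "ext_expect (Pn \<nu>) (\<lambda>x. min (h \<nu> x) (ereal K)) \<le> ext_expect (Pn \<nu>) (\<lambda>x. ereal (\<phi> x))"
      using assms(8)[OF that] by (rule ext_expect_mono)
    also have "\<dots> = ereal (\<integral>x. \<phi> x \<partial>Pn \<nu>)"
      using \<open>finite_measure (Pn \<nu>)\<close> assms(2,6,7)
      by (intro ext_expect_ereal integrable_bounded_continuous)
    finally show ?thesis by (simp add: add_right_mono)
  qed
  then have "limsup (\<lambda>\<nu>. ext_expect (Pn \<nu>) (h \<nu>)) \<le> limsup (\<lambda>\<nu>. ereal (\<integral>x. \<phi> x \<partial>Pn \<nu>) + tail \<nu>)"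
    by (intro Limsup_mono) (auto simp: eventually_sequentially)
  also have "\<dots> \<le> limsup (\<lambda>\<nu>. ereal (\<integral>x. \<phi> x \<partial>Pn \<nu>)) + limsup tail"
    by (rule ereal_limsup_add_mono)
  also have "limsup (\<lambda>\<nu>. ereal (\<integral>x. \<phi> x \<partial>Pn \<nu>)) = ereal (\<integral>x. \<phi> x \<partial>P)"
    using assms(3,6,7) unfolding weak_conv_def
    by (intro lim_imp_Limsup tendsto_ereal) auto
  finally show ?thesis unfolding tail_def .
qed

lemma integral_decseq_tendsto_ext_expect_INF:
  fixes \<phi> :: "nat \<Rightarrow> 'a::metric_space \<Rightarrow> real"
  assumes "finite_measure M" and "sets M = sets borel"
    and "\<And>m. continuous_on UNIV (\<phi> m)" and "\<And>m. bounded (range (\<phi> m))"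
    and "\<And>m x. \<phi> (Suc m) x \<le> \<phi> m x"
  shows "(\<lambda>m. ereal (\<integral>x. \<phi> m x \<partial>M)) \<longlonglongrightarrow> ext_expect M (\<lambda>x. INF m. ereal (\<phi> m x))"
proof -
  have "ext_expect M (\<lambda>x. ereal (\<phi> m x)) = ereal (\<integral>x. \<phi> m x \<partial>M)" for m
    using assms by (intro ext_expect_ereal integrable_bounded_continuous)
  moreover have "(\<lambda>m. ext_expect M (\<lambda>x. ereal (\<phi> m x))) \<longlonglongrightarrow> ext_expect M (\<lambda>x. INF m. ereal (\<phi> m x))"
  proof (rule ext_expect_monotone_convergence_INF)
    show "(\<lambda>x. ereal (\<phi> m x)) \<in> borel_measurable M" for m
      unfolding measurable_cong_sets[OF assms(2) refl]
      by (intro borel_measurable_ereal borel_measurable_continuous_onI assms(3))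
    obtain c where "\<And>x. \<phi> 0 x \<le> c"
      using assms(4)[of 0] by (auto simp: bounded_iff abs_le_iff)
    then show "(\<integral>\<^sup>+x. e2ennreal (max (ereal (\<phi> 0 x)) 0) \<partial>M) < \<infinity>"
      using assms(1) by (intro nn_integral_pos_part_bounded_above) auto
  qed (simp add: assms(5))
  ultimately show ?thesis by simp
qed

theorem corollary3p6:
  fixes Pn :: "nat \<Rightarrow> 'a::metric_space measure"
    and P :: "'a measure"
    and h :: "nat \<Rightarrow> 'a \<Rightarrow> ereal"
  assumes "\<And>\<nu>. prob_space (Pn \<nu>)"
    and "\<And>\<nu>. sets (Pn \<nu>) = sets borel"
    and "prob_space P"
    and "sets P = sets borel"
    and "weak_conv Pn P"
    and "\<And>\<nu>. h \<nu> \<in> borel_measurable borel"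
    and "Limsup at_top (\<lambda>K::real. limsup (\<lambda>\<nu>.
           ext_expect (Pn \<nu>) (\<lambda>\<xi>. if h \<nu> \<xi> \<ge> ereal K then h \<nu> \<xi> else 0))) = 0"
  shows "limsup (\<lambda>\<nu>. ext_expect (Pn \<nu>) (h \<nu>)) \<le> ext_expect P (joint_limsup h)"
proof (rule ereal_le_epsilon2)
  fix \<epsilon> :: real assume "0 < \<epsilon>"
  define tail where "tail K = limsup (\<lambda>\<nu>.
      ext_expect (Pn \<nu>) (\<lambda>\<xi>. if h \<nu> \<xi> \<ge> ereal K then h \<nu> \<xi> else 0))" for K
  have "\<forall>\<^sub>F K in at_top. tail K < ereal \<epsilon>"
    using assms(7) \<open>0 < \<epsilon>\<close> unfolding tail_def by (intro Limsup_lessD) simp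
  then obtain K where "K \<ge> 0" and tail_K: "tail K < ereal \<epsilon>"
    unfolding eventually_at_top_linorder by (metis max.cobounded1 max.cobounded2)
  define g where "g \<nu> x = min (h \<nu> x) (ereal K)" for \<nu> x
  have g_le: "g \<nu> x \<le> ereal K" for \<nu> x unfolding g_def by simp
  define \<phi> where "\<phi> = upper_approx K g"
  have cont: "continuous_on UNIV (\<phi> m)" and bdd: "bounded (range (\<phi> m))"
    and dec: "\<phi> (Suc m) x \<le> \<phi> m x" and dom: "m \<le> \<nu> \<Longrightarrow> g \<nu> x \<le> ereal (\<phi> m x)"
    and lim: "(INF m. ereal (\<phi> m x)) \<le> joint_limsup g x" for m \<nu> x
    unfolding \<phi>_def using g_le \<open>K \<ge> 0\<close>
    by (simp_all add: continuous_on_upper_approx bounded_range_upper_approx upper_approx_Suc_le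
          le_upper_approx INF_upper_approx_le_joint_limsup)
  have "limsup (\<lambda>\<nu>. ext_expect (Pn \<nu>) (h \<nu>)) \<le> ereal (\<integral>x. \<phi> m x \<partial>P) + tail K" for m
    using limsup_ext_expect_le_integral_add_tail[OF assms(1,2,5,6) \<open>K \<ge> 0\<close> cont bdd dom[unfolded g_def]]
    unfolding tail_def .
  then have "limsup (\<lambda>\<nu>. ext_expect (Pn \<nu>) (h \<nu>)) \<le> ereal (\<integral>x. \<phi> m x \<partial>P) + ereal \<epsilon>" for m
    using tail_K by (rule order_trans[OF _ add_left_mono[OF less_imp_le]])
  moreover have "(\<lambda>m. ereal (\<integral>x. \<phi> m x \<partial>P) + ereal \<epsilon>) \<longlonglongrightarrow> ext_expect P (\<lambda>x. INF m. ereal (\<phi> m x)) + ereal \<epsilon>"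
    using integral_decseq_tendsto_ext_expect_INF[where \<phi>=\<phi>, OF prob_space.finite_measure[OF assms(3)] assms(4) cont bdd dec]
    by (intro tendsto_add_ereal_general) auto
  ultimately have "limsup (\<lambda>\<nu>. ext_expect (Pn \<nu>) (h \<nu>)) \<le> ext_expect P (\<lambda>x. INF m. ereal (\<phi> m x)) + ereal \<epsilon>"
    by (intro LIMSEQ_le_const) auto
  also have "\<dots> \<le> ext_expect P (joint_limsup h) + ereal \<epsilon>"
    by (intro add_right_mono ext_expect_mono order_trans[OF lim joint_limsup_mono]) (simp add: g_def)
  finally show "limsup (\<lambda>\<nu>. ext_expect (Pn \<nu>) (h \<nu>)) \<le> ext_expect P (joint_limsup h) + ereal \<epsilon>" .
qed

end
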